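(* Let $\alpha,\beta\ge0$ with $\alpha+\beta<1$, $a\ge0$, $b>0$, $0<T<\infty$. Assume $f\in L_\infty(0,T')$ for every $T'<T$ and that for a.e. $t\in(0,T)$ $$0\le f(t)\le a+b\int_0^t\frac{f(\tau)}{\tau^\alpha(t-\tau)^\beta}d\tau.$$ Then $f\in L_\infty(0,T)$ and $$\|f\|_{L_\infty(0,T)}\le Ca\exp\Big(Cb^{\frac{1+\alpha+\beta}{1-\alpha-\beta}}T^{1+\alpha+\beta}\Big),$$ where $C$ depends only on $\alpha$ and $\beta$; moreover $C=1$ when $\alpha=\beta=0$. *)

theory Defs
  imports "HOL-Analysis.Analysis"
begin

end

theory Submission
  imports Defs
begin

text \<open>
  Suppose \<open>f \<le> (c + M) w\<close> a.e. on \<open>(0,T')\<close>; inserting this into the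
  integral inequality returns \<open>f \<le> (c + \<rho> M) w\<close> with \<open>\<rho> < 1\<close>, so starting from the a priori
  \<open>L\<^sub>\<infinity>\<close> bound on \<open>(0,T')\<close> and iterating gives \<open>f \<le> c w\<close>; letting \<open>T' \<rightarrow> T\<close> removes the
  restriction.

  For \<open>\<alpha> = \<beta> = 0\<close> take \<open>c = a\<close> and \<open>w t = exp (b t)\<close>, which gives \<open>\<rho> = 1 - exp (-b T')\<close>
  and the sharp bound \<open>a exp (b T)\<close>. Otherwise take \<open>c = 2a\<close> and \<open>w t = exp (l t)\<close>: raising \<open>\<alpha>\<close> to some
  \<open>\<alpha>' \<in> [\<alpha>, 1-\<beta>)\<close> at the price of a factor \<open>T powr (\<alpha>'-\<alpha>)\<close>, the weighted kernel satisfies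
  \<open>\<integral>\<^sub>0\<^sup>t exp (l \<tau>) \<tau> powr (-\<alpha>) (t-\<tau>) powr (-\<beta>) d\<tau> \<le>
    A T powr (\<alpha>'-\<alpha>) l powr (-(1-\<alpha>'-\<beta>)) exp (l t)\<close>,
  and choosing \<open>l\<close> so that \<open>b\<close> times this constant is \<open>1/2\<close> gives \<open>\<rho> = 1/2\<close>. With the right
  choice of \<open>\<alpha>'\<close> the exponent \<open>l T\<close> is a constant times
  \<open>b powr ((1+\<alpha>+\<beta>)/(1-\<alpha>-\<beta>)) T powr (1+\<alpha>+\<beta>)\<close>.
\<close>

lemma set_integral_greaterThanLessThan_of_has_integral:
  fixes f :: "real \<Rightarrow> real"
  assumes "(f has_integral I) {a..b}" and "\<And>x. x \<in> {a<..<b} \<Longrightarrow> 0 \<le> f x"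
  shows "set_integrable lebesgue {a<..<b} f" and "(LINT x:{a<..<b}|lebesgue. f x) = I"
proof -
  have I: "(f has_integral I) {a<..<b}"
    using assms(1) by (subst has_integral_spike_set_eq[where T="{a..b}"])
      (auto intro: negligible_subset[of "{a,b}"])
  show si: "set_integrable lebesgue {a<..<b} f"
    using I assms(2) by (intro nonnegative_absolutely_integrable_1) (auto simp: integrable_on_def)
  show "(LINT x:{a<..<b}|lebesgue. f x) = I"
    using set_lebesgue_integral_eq_integral(2)[OF si] I by (simp add: integral_unique)
qed

lemma has_integral_powr_from_0_reflected:
  fixes p c :: real
  assumes "p > -1" "c > 0"
  shows "((\<lambda>x. (c - x) powr p) has_integral (c powr (p+1)/(p+1))) {0..c}"
proof -
  have "((\<lambda>x. x powr p) has_integral (c powr (p+1)/(p+1))) {0..c}"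
    using has_integral_powr_from_0[of p c] assms by auto
  then have "((\<lambda>x. (-x) powr p) has_integral (c powr (p+1)/(p+1))) (cbox (-c) 0)"
    using has_integral_reflect_real[where f="\<lambda>x. x powr p" and a=0 and b=c] by simp
  from has_integral_affinity'[OF this, of 1 "-c"] show ?thesis
    by simp
qed

lemma exp_neg_le_powr_neg:
  fixes x g :: real
  assumes "x > 0" "0 < g" "g \<le> 1"
  shows "exp (-x) \<le> x powr (-g)"
proof -
  have "x powr g \<le> exp x"
  proof (cases "x \<le> 1")
    case True
    then have "x powr g \<le> 1"
      using assms powr_mono2[of g x 1] by simp
    also have "1 \<le> exp x"
      using assms by simp
    finally show ?thesis .
  next
    case False
    then have "x powr g \<le> x"
      using assms powr_mono[of g 1 x] by simp
    also have "\<dots> \<le> exp x"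
      using exp_ge_add_one_self[of x] by linarith
    finally show ?thesis .
  qed
  then show ?thesis
    using assms by (simp add: powr_minus exp_minus le_imp_inverse_le)
qed

text \<open>Split at \<open>t/2\<close>: on the left half the exponential factor is at most \<open>exp (-l t/2)\<close>;
  on the right half it is traded for the power \<open>(l (t-\<tau>)) powr (-(1-\<alpha>'-\<beta>))\<close>, which turns the
  kernel into an integrable power of \<open>t - \<tau>\<close>.\<close>

lemma exp_decay_kernel_le:
  fixes \<beta> \<alpha>' l t \<tau> :: real
  assumes "0 < \<alpha>'" "0 \<le> \<beta>" "\<alpha>' + \<beta> < 1" "l > 0" "0 < \<tau>" "\<tau> < t"
  shows "exp (-(l*(t-\<tau>))) * \<tau> powr (-\<alpha>') * (t-\<tau>) powr (-\<beta>) \<le>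
    exp (-(l*t/2)) * (t/2) powr (-\<beta>) * \<tau> powr (-\<alpha>') +
    (t/2) powr (-\<alpha>') * l powr (-(1-\<alpha>'-\<beta>)) * (t-\<tau>) powr (\<alpha>'-1)"
proof (cases "\<tau> \<le> t/2")
  case True
  have "exp (-(l*(t-\<tau>))) \<le> exp (-(l*t/2))"
    using True assms by (simp add: mult_left_mono)
  moreover have "(t-\<tau>) powr (-\<beta>) \<le> (t/2) powr (-\<beta>)"
    using True assms by (intro powr_mono2') auto
  ultimately have "exp (-(l*(t-\<tau>))) * (t-\<tau>) powr (-\<beta>) \<le> exp (-(l*t/2)) * (t/2) powr (-\<beta>)"
    by (intro mult_mono) auto
  from mult_right_mono[OF this, of "\<tau> powr (-\<alpha>')"] show ?thesis
    by (simp add: mult_ac add_increasing2)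
next
  case False
  define g where "g = 1 - \<alpha>' - \<beta>"
  have "exp (-(l*(t-\<tau>))) \<le> (l*(t-\<tau>)) powr (-g)"
    using assms by (intro exp_neg_le_powr_neg) (auto simp: g_def)
  moreover have "\<tau> powr (-\<alpha>') \<le> (t/2) powr (-\<alpha>')"
    using False assms by (intro powr_mono2') auto
  ultimately have "exp (-(l*(t-\<tau>))) * \<tau> powr (-\<alpha>') * (t-\<tau>) powr (-\<beta>) \<le>
      (l*(t-\<tau>)) powr (-g) * (t/2) powr (-\<alpha>') * (t-\<tau>) powr (-\<beta>)"
    by (intro mult_right_mono mult_mono) auto
  also have "\<dots> = (t/2) powr (-\<alpha>') * l powr (-g) * (t-\<tau>) powr (\<alpha>'-1)"
    using assms by (simp add: powr_mult powr_add[symmetric] g_def mult_ac)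
  finally show ?thesis
    unfolding g_def by (simp add: add_increasing)
qed

lemma abel_kernel_exp_le:
  fixes \<alpha> \<beta> \<alpha>' l t T \<tau> :: real
  assumes "0 \<le> \<alpha>" "\<alpha> \<le> \<alpha>'" "0 < \<alpha>'" "0 \<le> \<beta>" "\<alpha>' + \<beta> < 1" "l > 0"
    "0 < \<tau>" "\<tau> < t" "t \<le> T"
  shows "exp (l*\<tau>) / (\<tau> powr \<alpha> * (t-\<tau>) powr \<beta>) \<le> T powr (\<alpha>'-\<alpha>) * exp (l*t) *
    (exp (-(l*t/2)) * (t/2) powr (-\<beta>) * \<tau> powr (-\<alpha>') +
     (t/2) powr (-\<alpha>') * l powr (-(1-\<alpha>'-\<beta>)) * (t-\<tau>) powr (\<alpha>'-1))"
proof -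
  have "\<tau> powr (\<alpha>'-\<alpha>) \<le> T powr (\<alpha>'-\<alpha>)"
    using assms by (intro powr_mono2) auto
  from mult_right_mono[OF this, of "\<tau> powr (-\<alpha>')"]
  have raise_exponent: "\<tau> powr (-\<alpha>) \<le> T powr (\<alpha>'-\<alpha>) * \<tau> powr (-\<alpha>')"
    by (simp add: powr_add[symmetric])
  have "exp (l*\<tau>) / (\<tau> powr \<alpha> * (t-\<tau>) powr \<beta>) =
      exp (l*t) * (exp (-(l*(t-\<tau>))) * \<tau> powr (-\<alpha>) * (t-\<tau>) powr (-\<beta>))"
    by (simp add: powr_minus divide_inverse exp_minus exp_diff right_diff_distrib mult_ac)
  also have "\<dots> \<le> T powr (\<alpha>'-\<alpha>) * exp (l*t) * (exp (-(l*(t-\<tau>))) * \<tau> powr (-\<alpha>') * (t-\<tau>) powr (-\<beta>))"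
    using mult_left_mono[OF mult_right_mono[OF mult_left_mono[OF raise_exponent, of "exp (-(l*(t-\<tau>)))"],
        of "(t-\<tau>) powr (-\<beta>)"], of "exp (l*t)"]
    by (simp add: mult_ac)
  also have "\<dots> \<le> T powr (\<alpha>'-\<alpha>) * exp (l*t) *
      (exp (-(l*t/2)) * (t/2) powr (-\<beta>) * \<tau> powr (-\<alpha>') +
       (t/2) powr (-\<alpha>') * l powr (-(1-\<alpha>'-\<beta>)) * (t-\<tau>) powr (\<alpha>'-1))"
    using assms by (intro mult_left_mono exp_decay_kernel_le) auto
  finally show ?thesis .
qed

lemma abel_kernel_majorant_integral_le:
  fixes \<beta> \<alpha>' l t :: real
  assumes "0 < \<alpha>'" "0 \<le> \<beta>" "\<alpha>' + \<beta> < 1" "l > 0" "t > 0"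
  shows "exp (-(l*t/2)) * (t/2) powr (-\<beta>) * (t powr (1-\<alpha>') / (1-\<alpha>')) +
      (t/2) powr (-\<alpha>') * l powr (-(1-\<alpha>'-\<beta>)) * (t powr \<alpha>' / \<alpha>')
    \<le> (2/(1-\<alpha>') + 2/\<alpha>') * l powr (-(1-\<alpha>'-\<beta>))"
proof -
  define g where "g = 1 - \<alpha>' - \<beta>"
  define u where "u = t/2"
  have u: "u > 0" "t = 2*u" using assms unfolding u_def by auto
  have "exp (-(l*u)) \<le> l powr (-g) * u powr (-g)"
    using exp_neg_le_powr_neg[of "l*u" g] assms u by (simp add: powr_mult g_def)
  from mult_right_mono[OF this, of "u powr g"]
  have decay: "exp (-(l*u)) * u powr g \<le> l powr (-g)"
    using u by (simp add: mult.assoc powr_add[symmetric])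
  have two_powr: "2 powr s \<le> 2" if "s \<le> 1" for s :: real
    using that powr_mono[of s 1 2] by simp
  have "exp (-(l*t/2)) * (t/2) powr (-\<beta>) * t powr (1-\<alpha>') = 2 powr (1-\<alpha>') * (exp (-(l*u)) * u powr g)"
    using u by (simp add: u_def[symmetric] powr_mult powr_add[symmetric] g_def algebra_simps)
  also have "\<dots> \<le> 2 * l powr (-g)"
    using assms decay two_powr[of "1-\<alpha>'"] by (intro mult_mono) auto
  finally have A1: "exp (-(l*t/2)) * (t/2) powr (-\<beta>) * t powr (1-\<alpha>') \<le> 2 * l powr (-g)" .
  have "(t/2) powr (-\<alpha>') * t powr \<alpha>' = 2 powr \<alpha>'"
    using u by (simp add: powr_mult powr_add[symmetric] powr_minus field_simps)
  then have A2: "(t/2) powr (-\<alpha>') * t powr \<alpha>' \<le> 2"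
    using assms two_powr[of \<alpha>'] by simp
  have "exp (-(l*t/2)) * (t/2) powr (-\<beta>) * (t powr (1-\<alpha>') / (1-\<alpha>')) \<le> 2 * l powr (-g) / (1-\<alpha>')"
    using A1 assms by (simp add: divide_right_mono)
  moreover have "(t/2) powr (-\<alpha>') * l powr (-g) * (t powr \<alpha>' / \<alpha>') \<le> 2 * l powr (-g) / \<alpha>'"
    using mult_right_mono[OF A2, of "l powr (-g)"] assms by (simp add: divide_right_mono mult_ac)
  ultimately show ?thesis
    unfolding g_def[symmetric] by (simp add: field_simps)
qed

lemma set_integral_abel_kernel_le:
  fixes \<alpha> \<beta> \<alpha>' l t T B :: real and f :: "real \<Rightarrow> real"
  assumes "0 \<le> \<alpha>" "\<alpha> \<le> \<alpha>'" "0 < \<alpha>'" "0 \<le> \<beta>" "\<alpha>' + \<beta> < 1" "l > 0"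
    "0 < t" "t \<le> T" "0 \<le> B"
    and f: "AE \<tau> in lebesgue. \<tau> \<in> {0<..<t} \<longrightarrow> f \<tau> \<le> B * exp (l*\<tau>)"
  shows "(LINT \<tau>:{0<..<t}|lebesgue. f \<tau> / (\<tau> powr \<alpha> * (t-\<tau>) powr \<beta>))
     \<le> B * T powr (\<alpha>'-\<alpha>) * exp (l*t) * ((2/(1-\<alpha>') + 2/\<alpha>') * l powr (-(1-\<alpha>'-\<beta>)))"
proof -
  define c1 where "c1 = exp (-(l*t/2)) * (t/2) powr (-\<beta>)"
  define c2 where "c2 = (t/2) powr (-\<alpha>') * l powr (-(1-\<alpha>'-\<beta>))"
  define K where "K = B * T powr (\<alpha>'-\<alpha>) * exp (l*t)"
  define D where "D = (\<lambda>\<tau>. K * (c1 * \<tau> powr (-\<alpha>')) + K * (c2 * (t-\<tau>) powr (\<alpha>'-1)))"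
  have K0: "K \<ge> 0" unfolding K_def using assms by simp
  have i1: "set_integrable lebesgue {0<..<t} (\<lambda>\<tau>. \<tau> powr (-\<alpha>'))"
   and v1: "(LINT \<tau>:{0<..<t}|lebesgue. \<tau> powr (-\<alpha>')) = t powr (1-\<alpha>')/(1-\<alpha>')"
    using set_integral_greaterThanLessThan_of_has_integral[OF has_integral_powr_from_0[of "-\<alpha>'" t]]
      assms by auto
  have i2: "set_integrable lebesgue {0<..<t} (\<lambda>\<tau>. (t-\<tau>) powr (\<alpha>'-1))"
   and v2: "(LINT \<tau>:{0<..<t}|lebesgue. (t-\<tau>) powr (\<alpha>'-1)) = t powr \<alpha>'/\<alpha>'"
    using set_integral_greaterThanLessThan_of_has_integral[OF has_integral_powr_from_0_reflected[of "\<alpha>'-1" t]]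
      assms by auto
  have iD: "set_integrable lebesgue {0<..<t} D"
    unfolding D_def using i1 i2 by (intro set_integral_add set_integrable_mult_right) auto
  have "f \<tau> / (\<tau> powr \<alpha> * (t-\<tau>) powr \<beta>) \<le> D \<tau>"
    if "\<tau> \<in> {0<..<t}" "f \<tau> \<le> B * exp (l*\<tau>)" for \<tau>
  proof -
    have "f \<tau> / (\<tau> powr \<alpha> * (t-\<tau>) powr \<beta>) \<le> B * (exp (l*\<tau>) / (\<tau> powr \<alpha> * (t-\<tau>) powr \<beta>))"
      using that by (simp add: divide_right_mono)
    also have "\<dots> \<le> D \<tau>"
      using mult_left_mono[OF abel_kernel_exp_le[of \<alpha> \<alpha>' \<beta> l \<tau> t T], of B] assms that
      unfolding D_def K_def c1_def c2_def by (simp add: algebra_simps)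
    finally show ?thesis .
  qed
  with f have "(LINT \<tau>:{0<..<t}|lebesgue. f \<tau> / (\<tau> powr \<alpha> * (t-\<tau>) powr \<beta>)) \<le> (LINT \<tau>:{0<..<t}|lebesgue. D \<tau>)"
    unfolding set_lebesgue_integral_def using iD K0
    by (intro integral_mono_AE') (auto simp: set_integrable_def indicator_def D_def c1_def c2_def
        elim!: eventually_mono)
  also have "\<dots> = K * (c1 * (t powr (1-\<alpha>')/(1-\<alpha>')) + c2 * (t powr \<alpha>'/\<alpha>'))"
    unfolding D_def using i1 i2 v1 v2 by (subst set_integral_add) (auto simp: algebra_simps)
  also have "\<dots> \<le> K * ((2/(1-\<alpha>') + 2/\<alpha>') * l powr (-(1-\<alpha>'-\<beta>)))"
    using abel_kernel_majorant_integral_le[of \<alpha>' \<beta> l t] assms K0 unfolding c1_def c2_def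
    by (intro mult_left_mono) auto
  finally show ?thesis unfolding K_def .
qed

lemma set_integral_le_of_exp_bound:
  fixes b t B :: real and f :: "real \<Rightarrow> real"
  assumes "b > 0" "0 < t" "0 \<le> B"
    and f: "AE \<tau> in lebesgue. \<tau> \<in> {0<..<t} \<longrightarrow> f \<tau> \<le> B * exp (b*\<tau>)"
  shows "(LINT \<tau>:{0<..<t}|lebesgue. f \<tau>) \<le> B * ((exp (b*t) - 1)/b)"
proof -
  have "((\<lambda>\<tau>. exp (b*\<tau>)) has_integral (exp (b*t)/b - exp (b*0)/b)) {0..t}"
    using assms by (intro fundamental_theorem_of_calculus)
      (auto intro!: derivative_eq_intros simp: has_real_derivative_iff_has_vector_derivative[symmetric])
  then have "((\<lambda>\<tau>. exp (b*\<tau>)) has_integral ((exp (b*t) - 1)/b)) {0..t}"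
    by (simp add: diff_divide_distrib)
  from set_integral_greaterThanLessThan_of_has_integral[OF this]
  have i: "set_integrable lebesgue {0<..<t} (\<lambda>\<tau>. exp (b*\<tau>))"
    and v: "(LINT \<tau>:{0<..<t}|lebesgue. exp (b*\<tau>)) = (exp (b*t) - 1)/b"
    by auto
  have "(LINT \<tau>:{0<..<t}|lebesgue. f \<tau>) \<le> (LINT \<tau>:{0<..<t}|lebesgue. B * exp (b*\<tau>))"
    unfolding set_lebesgue_integral_def using set_integrable_mult_right[OF i, of B] f assms
    by (intro integral_mono_AE') (auto simp: set_integrable_def indicator_def elim!: eventually_mono)
  also have "\<dots> = B * ((exp (b*t) - 1)/b)"
    using v by simp
  finally show ?thesis .
qed

lemma AE_le_of_contraction:
  fixes f w :: "'a \<Rightarrow> real"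
  assumes "0 \<le> \<rho>" "\<rho> < 1" "\<And>x. x \<in> S \<Longrightarrow> 0 \<le> w x"
    and step: "\<And>M. 0 \<le> M \<Longrightarrow> (AE x in \<mu>. x \<in> S \<longrightarrow> f x \<le> (c + M) * w x) \<Longrightarrow>
      (AE x in \<mu>. x \<in> S \<longrightarrow> f x \<le> (c + \<rho> * M) * w x)"
    and "0 \<le> M\<^sub>0" and init: "AE x in \<mu>. x \<in> S \<longrightarrow> f x \<le> (c + M\<^sub>0) * w x"
  shows "AE x in \<mu>. x \<in> S \<longrightarrow> f x \<le> c * w x"
proof -
  have bound: "AE x in \<mu>. x \<in> S \<longrightarrow> f x \<le> (c + \<rho>^n * M\<^sub>0) * w x" for n
  proof (induction n)
    case 0
    then show ?case using init by simp
  next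
    case (Suc n)
    then show ?case
      using step[of "\<rho>^n * M\<^sub>0"] assms by (simp add: mult_ac)
  qed
  have "AE x in \<mu>. \<forall>n. x \<in> S \<longrightarrow> f x \<le> (c + \<rho>^n * M\<^sub>0) * w x"
    by (intro AE_all_countable[THEN iffD2] allI bound)
  then show ?thesis
  proof (eventually_elim, intro impI)
    fix x assume x: "x \<in> S" and "\<forall>n. x \<in> S \<longrightarrow> f x \<le> (c + \<rho>^n * M\<^sub>0) * w x"
    moreover have "(\<lambda>n. (c + \<rho>^n * M\<^sub>0) * w x) \<longlonglongrightarrow> (c + 0 * M\<^sub>0) * w x"
      using assms by (intro tendsto_intros LIMSEQ_power_zero) auto
    ultimately show "f x \<le> c * w x"
      by (intro LIMSEQ_le_const[of "\<lambda>n. (c + \<rho>^n * M\<^sub>0) * w x"]) auto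
  qed
qed

lemma AE_greaterThanLessThan_of_initial_segments:
  fixes T :: real
  assumes "\<And>T'. 0 < T' \<Longrightarrow> T' < T \<Longrightarrow> AE t in lebesgue. t \<in> {0<..<T'} \<longrightarrow> P t"
  shows "AE t in lebesgue. t \<in> {0<..<T} \<longrightarrow> P t"
proof -
  have segment: "AE t in lebesgue. t \<in> {0<..<T'} \<longrightarrow> P t" if "T' < T" for T'
    using assms[of T'] that by (cases "0 < T'") auto
  have "AE t in lebesgue. \<forall>n. t \<in> {0<..<T - inverse (Suc n)} \<longrightarrow> P t"
    by (intro AE_all_countable[THEN iffD2] allI segment) simp
  then show ?thesis
  proof (eventually_elim, intro impI)
    fix t assume "\<forall>n. t \<in> {0<..<T - inverse (Suc n)} \<longrightarrow> P t" "t \<in> {0<..<T}"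
    moreover obtain n where "t < T - inverse (Suc n)"
      using \<open>t \<in> {0<..<T}\<close> reals_Archimedean[of "T - t"] by (auto simp: algebra_simps)
    ultimately show "P t" by auto
  qed
qed

lemma borel_measurable_greaterThanLessThan_of_initial_segments:
  fixes T :: real and f :: "real \<Rightarrow> real"
  assumes "\<And>T'. T' < T \<Longrightarrow> f \<in> borel_measurable (restrict_space lebesgue {0<..<T'})"
  shows "f \<in> borel_measurable (restrict_space lebesgue {0<..<T})"
proof (rule measurable_piecewise_restrict)
  let ?C = "range (\<lambda>n::nat. {0<..<T - inverse (Suc n)})"
  show "countable ?C" by simp
  show "\<Omega> \<inter> space (restrict_space lebesgue {0<..<T}) \<in> sets (restrict_space lebesgue {0<..<T})"
    if "\<Omega> \<in> ?C" for \<Omega>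
    using that by (auto simp: sets_restrict_space)
  show "space (restrict_space lebesgue {0<..<T}) \<subseteq> \<Union>?C"
  proof
    fix t assume "t \<in> space (restrict_space lebesgue {0<..<T})"
    then have t: "0 < t" "t < T" by auto
    then obtain n where "t < T - inverse (Suc n)"
      using reals_Archimedean[of "T - t"] by (auto simp: algebra_simps)
    with t show "t \<in> \<Union>?C" by auto
  qed
  show "f \<in> borel_measurable (restrict_space (restrict_space lebesgue {0<..<T}) \<Omega>)"
    if "\<Omega> \<in> ?C" for \<Omega>
  proof -
    obtain n where \<Omega>: "\<Omega> = {0<..<T - inverse (Suc n)}" using \<open>\<Omega> \<in> ?C\<close> by auto
    then have "restrict_space (restrict_space lebesgue {0<..<T}) \<Omega> = restrict_space lebesgue \<Omega>"
      by (subst restrict_restrict_space) (auto intro!: arg_cong[where f="restrict_space lebesgue"])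
    then show ?thesis using assms \<Omega> by simp
  qed
qed

lemma AE_le_weight_of_local_contraction:
  fixes f w \<rho> :: "real \<Rightarrow> real" and c T :: real
  assumes "0 \<le> c" "\<And>t. 0 < t \<Longrightarrow> 1 \<le> w t"
    and bounded: "\<And>T'. T' < T \<Longrightarrow> \<exists>M. AE t in lebesgue. t \<in> {0<..<T'} \<longrightarrow> \<bar>f t\<bar> \<le> M"
    and \<rho>: "\<And>T'. 0 < T' \<Longrightarrow> T' < T \<Longrightarrow> 0 \<le> \<rho> T' \<and> \<rho> T' < 1"
    and step: "\<And>T' M. 0 < T' \<Longrightarrow> T' < T \<Longrightarrow> 0 \<le> M \<Longrightarrow>
      (AE t in lebesgue. t \<in> {0<..<T'} \<longrightarrow> f t \<le> (c + M) * w t) \<Longrightarrow>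
      (AE t in lebesgue. t \<in> {0<..<T'} \<longrightarrow> f t \<le> (c + \<rho> T' * M) * w t)"
  shows "AE t in lebesgue. t \<in> {0<..<T} \<longrightarrow> f t \<le> c * w t"
proof (rule AE_greaterThanLessThan_of_initial_segments)
  fix T' assume T': "0 < T'" "T' < T"
  obtain M where "AE t in lebesgue. t \<in> {0<..<T'} \<longrightarrow> \<bar>f t\<bar> \<le> M"
    using bounded T' by blast
  then have init: "AE t in lebesgue. t \<in> {0<..<T'} \<longrightarrow> f t \<le> (c + max 0 M) * w t"
  proof (eventually_elim, intro impI)
    fix t assume "t \<in> {0<..<T'} \<longrightarrow> \<bar>f t\<bar> \<le> M" "t \<in> {0<..<T'}"
    then have "f t \<le> c + max 0 M" "1 \<le> w t"
      using assms by auto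
    then show "f t \<le> (c + max 0 M) * w t"
      using \<open>0 \<le> c\<close> mult_left_mono[of 1 "w t" "c + max 0 M"] by auto
  qed
  show "AE t in lebesgue. t \<in> {0<..<T'} \<longrightarrow> f t \<le> c * w t"
  proof (rule AE_le_of_contraction[OF _ _ _ step[OF T'] _ init])
    show "0 \<le> \<rho> T'" "\<rho> T' < 1"
      using \<rho>[OF T'] by auto
    show "0 \<le> w t" if "t \<in> {0<..<T'}" for t
      using assms(2)[of t] that by simp
  qed auto
qed

lemma AE_abs_le_exp_endpoint:
  fixes f :: "real \<Rightarrow> real" and c l T :: real
  assumes "0 \<le> c" "0 \<le> l"
    and "AE t in lebesgue. t \<in> {0<..<T} \<longrightarrow> 0 \<le> f t \<and> f t \<le> c * exp (l*t)"
  shows "AE t in lebesgue. t \<in> {0<..<T} \<longrightarrow> \<bar>f t\<bar> \<le> c * exp (l*T)"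
  using assms(3)
proof (eventually_elim, intro impI)
  fix t assume "t \<in> {0<..<T} \<longrightarrow> 0 \<le> f t \<and> f t \<le> c * exp (l*t)" "t \<in> {0<..<T}"
  moreover have "c * exp (l*t) \<le> c * exp (l*T)"
    using \<open>t \<in> {0<..<T}\<close> assms by (intro mult_left_mono) (auto intro: mult_left_mono)
  ultimately show "\<bar>f t\<bar> \<le> c * exp (l*T)" by auto
qed

lemma gronwall_step:
  fixes a b M t T' :: real and f :: "real \<Rightarrow> real"
  assumes "0 \<le> a" "0 < b" "0 \<le> M" "0 < t" "t < T'"
    and bound: "AE \<tau> in lebesgue. \<tau> \<in> {0<..<t} \<longrightarrow> f \<tau> \<le> (a + M) * exp (b*\<tau>)"
    and f_t: "f t \<le> a + b * (LINT \<tau>:{0<..<t}|lebesgue. f \<tau>)"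
  shows "f t \<le> (a + (1 - exp (-(b*T'))) * M) * exp (b*t)"
proof -
  have "b * (LINT \<tau>:{0<..<t}|lebesgue. f \<tau>) \<le> b * ((a + M) * ((exp (b*t) - 1)/b))"
    using set_integral_le_of_exp_bound[OF \<open>0 < b\<close> \<open>0 < t\<close> _ bound] assms
    by (intro mult_left_mono) auto
  with f_t have "f t \<le> a + b * ((a + M) * ((exp (b*t) - 1)/b))"
    by linarith
  also have "\<dots> = (a + M) * exp (b*t) - M"
    using \<open>0 < b\<close> by (simp add: field_simps)
  also have "\<dots> \<le> (a + (1 - exp (-(b*T'))) * M) * exp (b*t)"
  proof -
    have "exp (-(b*T')) * exp (b*t) \<le> 1"
      using assms by (simp add: exp_add[symmetric])
    from mult_left_mono[OF this \<open>0 \<le> M\<close>] show ?thesis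
      by (simp add: algebra_simps)
  qed
  finally show ?thesis .
qed

lemma gronwall_AE:
  fixes a b T :: real and f :: "real \<Rightarrow> real"
  assumes "0 \<le> a" "0 < b"
    and bounded: "\<And>T'. T' < T \<Longrightarrow> \<exists>M. AE t in lebesgue. t \<in> {0<..<T'} \<longrightarrow> \<bar>f t\<bar> \<le> M"
    and f: "AE t in lebesgue. t \<in> {0<..<T} \<longrightarrow>
      0 \<le> f t \<and> f t \<le> a + b * (LINT \<tau>:{0<..<t}|lebesgue. f \<tau>)"
  shows "AE t in lebesgue. t \<in> {0<..<T} \<longrightarrow> \<bar>f t\<bar> \<le> a * exp (b*T)"
proof -
  have "AE t in lebesgue. t \<in> {0<..<T} \<longrightarrow> f t \<le> a * exp (b*t)"
  proof (rule AE_le_weight_of_local_contraction[where \<rho>="\<lambda>T'. 1 - exp (-(b*T'))"])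
    fix T' M :: real
    assume T': "0 < T'" "T' < T" and "0 \<le> M"
      and bound: "AE t in lebesgue. t \<in> {0<..<T'} \<longrightarrow> f t \<le> (a + M) * exp (b*t)"
    show "AE t in lebesgue. t \<in> {0<..<T'} \<longrightarrow> f t \<le> (a + (1 - exp (-(b*T'))) * M) * exp (b*t)"
      using f
    proof (eventually_elim, intro impI)
      fix t assume "t \<in> {0<..<T} \<longrightarrow> 0 \<le> f t \<and> f t \<le> a + b * (LINT \<tau>:{0<..<t}|lebesgue. f \<tau>)"
        and t: "t \<in> {0<..<T'}"
      moreover have "AE \<tau> in lebesgue. \<tau> \<in> {0<..<t} \<longrightarrow> f \<tau> \<le> (a + M) * exp (b*\<tau>)"
        using bound by eventually_elim (use t in auto)
      ultimately show "f t \<le> (a + (1 - exp (-(b*T'))) * M) * exp (b*t)"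
        using assms T' \<open>0 \<le> M\<close> by (intro gronwall_step) auto
    qed
  next
    show "0 \<le> 1 - exp (-(b*T')) \<and> 1 - exp (-(b*T')) < 1" if "0 < T'" "T' < T" for T'
      using that \<open>0 < b\<close> by auto
  qed (use assms in auto)
  with f show ?thesis
    using assms by (intro AE_abs_le_exp_endpoint) (auto elim: eventually_mono)
qed

lemma abel_gronwall_step:
  fixes \<alpha> \<beta> \<alpha>' l a b M t T :: real and f :: "real \<Rightarrow> real"
  assumes "0 \<le> \<alpha>" "\<alpha> \<le> \<alpha>'" "0 < \<alpha>'" "0 \<le> \<beta>" "\<alpha>' + \<beta> < 1" "0 < l"
    and "0 \<le> a" "0 < b" "0 \<le> M" "0 < t" "t \<le> T"
    and rate: "b * (T powr (\<alpha>'-\<alpha>) * (2/(1-\<alpha>') + 2/\<alpha>') * l powr (-(1-\<alpha>'-\<beta>))) = 1/2"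
    and bound: "AE \<tau> in lebesgue. \<tau> \<in> {0<..<t} \<longrightarrow> f \<tau> \<le> (2*a + M) * exp (l*\<tau>)"
    and f_t: "f t \<le> a + b * (LINT \<tau>:{0<..<t}|lebesgue. f \<tau> / (\<tau> powr \<alpha> * (t - \<tau>) powr \<beta>))"
  shows "f t \<le> (2*a + 1/2 * M) * exp (l*t)"
proof -
  have "b * (LINT \<tau>:{0<..<t}|lebesgue. f \<tau> / (\<tau> powr \<alpha> * (t - \<tau>) powr \<beta>)) \<le>
      b * ((2*a + M) * T powr (\<alpha>'-\<alpha>) * exp (l*t) * ((2/(1-\<alpha>') + 2/\<alpha>') * l powr (-(1-\<alpha>'-\<beta>))))"
    using set_integral_abel_kernel_le[of \<alpha> \<alpha>' \<beta> l t T "2*a + M", OF _ _ _ _ _ _ _ _ _ bound] assms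
    by (intro mult_left_mono) auto
  also have "\<dots> = (2*a + M) * exp (l*t) *
      (b * (T powr (\<alpha>'-\<alpha>) * (2/(1-\<alpha>') + 2/\<alpha>') * l powr (-(1-\<alpha>'-\<beta>))))"
    by (simp only: ac_simps)
  finally have "b * (LINT \<tau>:{0<..<t}|lebesgue. f \<tau> / (\<tau> powr \<alpha> * (t - \<tau>) powr \<beta>)) \<le>
      (2*a + M) * exp (l*t) / 2"
    unfolding rate by simp
  moreover have "a \<le> a * exp (l*t)"
    using assms mult_left_mono[of 1 "exp (l*t)" a] by simp
  ultimately show ?thesis
    using f_t by (simp add: algebra_simps)
qed

text \<open>The exponent \<open>\<alpha>'\<close> lies strictly between \<open>\<alpha>\<close> and \<open>1 - \<beta>\<close>; it is chosen so that
  \<open>(\<alpha>' - \<alpha>) / (1 - \<alpha>' - \<beta>) = \<alpha> + \<beta>\<close>, which makes the exponent of \<open>T\<close> equal to \<open>1 + \<alpha> + \<beta>\<close>.\<close>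

definition abel_gronwall_constant :: "real \<Rightarrow> real \<Rightarrow> real" where
  "abel_gronwall_constant \<alpha> \<beta> =
    (let \<alpha>' = \<alpha> + (1-\<alpha>-\<beta>)*(\<alpha>+\<beta>)/(1+\<alpha>+\<beta>) in (4/(1-\<alpha>') + 4/\<alpha>') powr ((1+\<alpha>+\<beta>)/(1-\<alpha>-\<beta>)))"

lemma abel_gronwall_rate:
  fixes \<alpha> \<beta> b T :: real
  assumes \<alpha>: "0 \<le> \<alpha>" and \<beta>: "0 \<le> \<beta>" and s: "0 < \<alpha> + \<beta>" "\<alpha> + \<beta> < 1"
    and b: "0 < b" and T: "0 < T"
  obtains \<alpha>' l where "\<alpha> \<le> \<alpha>'" "0 < \<alpha>'" "\<alpha>' + \<beta> < 1" "0 < l"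
    "b * (T powr (\<alpha>'-\<alpha>) * (2/(1-\<alpha>') + 2/\<alpha>') * l powr (-(1-\<alpha>'-\<beta>))) = 1/2"
    "l * T = abel_gronwall_constant \<alpha> \<beta> * b powr ((1+\<alpha>+\<beta>)/(1-\<alpha>-\<beta>)) * T powr (1+\<alpha>+\<beta>)"
proof -
  define e where "e = (1-\<alpha>-\<beta>)*(\<alpha>+\<beta>)/(1+\<alpha>+\<beta>)"
  define \<alpha>' where "\<alpha>' = \<alpha> + e"
  define g where "g = 1 - \<alpha>' - \<beta>"
  define A where "A = 2/(1-\<alpha>') + 2/\<alpha>'"
  define l where "l = (2*b*T powr e*A) powr (1/g)"
  have "(\<alpha>+\<beta>)/(1+\<alpha>+\<beta>) < 1"
    using s by simp
  from mult_strict_left_mono[OF this, of "1-\<alpha>-\<beta>"]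
  have e: "0 < e" "e < 1 - \<alpha> - \<beta>"
    using s by (auto simp: e_def)
  have \<alpha>': "\<alpha> \<le> \<alpha>'" "0 < \<alpha>'" "\<alpha>' + \<beta> < 1"
    using e \<alpha> by (auto simp: \<alpha>'_def)
  have g: "g = (1-\<alpha>-\<beta>)/(1+\<alpha>+\<beta>)" "0 < g"
    using s \<alpha>' by (auto simp: g_def \<alpha>'_def e_def field_simps)
  have "0 < A"
    using \<alpha>' \<beta> unfolding A_def by (intro add_pos_pos divide_pos_pos) auto
  then have "0 < l"
    using b T unfolding l_def by simp
  have "b * (T powr (\<alpha>'-\<alpha>) * A * l powr (-g)) = 1/2"
  proof -
    have "l powr (-g) = (2*b*T powr e*A) powr (-1)"
      unfolding l_def using g(2) by (simp add: powr_powr)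
    also have "\<dots> = 1 / (2*b*T powr e*A)"
      using \<open>0 < A\<close> b T by (simp add: powr_neg_one)
    finally show ?thesis
      using \<open>0 < A\<close> b T by (simp add: \<alpha>'_def field_simps)
  qed
  moreover have "l * T = abel_gronwall_constant \<alpha> \<beta> * b powr ((1+\<alpha>+\<beta>)/(1-\<alpha>-\<beta>)) * T powr (1+\<alpha>+\<beta>)"
  proof -
    have "e = g * (\<alpha> + \<beta>)"
      unfolding e_def g(1) by simp
    then have "e * (1/g) + 1 = 1 + \<alpha> + \<beta>"
      using g(2) by simp
    then have "l * T = (2*A) powr (1/g) * b powr (1/g) * T powr (1 + \<alpha> + \<beta>)"
      using b T \<open>0 < A\<close> by (simp add: l_def powr_mult powr_powr powr_add mult_ac)
    then show ?thesis
      using g by (simp add: abel_gronwall_constant_def A_def \<alpha>'_def e_def Let_def)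
  qed
  ultimately show ?thesis
    using that[of \<alpha>' l] \<alpha>' \<open>0 < l\<close> unfolding A_def g_def by blast
qed

lemma abel_gronwall_AE:
  fixes \<alpha> \<beta> a b T :: real and f :: "real \<Rightarrow> real"
  assumes \<alpha>: "0 \<le> \<alpha>" and \<beta>: "0 \<le> \<beta>" and s: "0 < \<alpha> + \<beta>" "\<alpha> + \<beta> < 1"
    and a: "0 \<le> a" and b: "0 < b" and T: "0 < T"
    and bounded: "\<And>T'. T' < T \<Longrightarrow> \<exists>M. AE t in lebesgue. t \<in> {0<..<T'} \<longrightarrow> \<bar>f t\<bar> \<le> M"
    and f: "AE t in lebesgue. t \<in> {0<..<T} \<longrightarrow>
      0 \<le> f t \<and> f t \<le> a + b * (LINT \<tau>:{0<..<t}|lebesgue. f \<tau> / (\<tau> powr \<alpha> * (t - \<tau>) powr \<beta>))"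
  shows "AE t in lebesgue. t \<in> {0<..<T} \<longrightarrow>
    \<bar>f t\<bar> \<le> 2 * a * exp (abel_gronwall_constant \<alpha> \<beta> * b powr ((1+\<alpha>+\<beta>)/(1-\<alpha>-\<beta>)) * T powr (1+\<alpha>+\<beta>))"
proof -
  obtain \<alpha>' l where \<alpha>': "\<alpha> \<le> \<alpha>'" "0 < \<alpha>'" "\<alpha>' + \<beta> < 1" and "0 < l"
    and rate: "b * (T powr (\<alpha>'-\<alpha>) * (2/(1-\<alpha>') + 2/\<alpha>') * l powr (-(1-\<alpha>'-\<beta>))) = 1/2"
    and exponent: "l * T = abel_gronwall_constant \<alpha> \<beta> * b powr ((1+\<alpha>+\<beta>)/(1-\<alpha>-\<beta>)) * T powr (1+\<alpha>+\<beta>)"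
    using abel_gronwall_rate[OF \<alpha> \<beta> s b T] by blast
  have "AE t in lebesgue. t \<in> {0<..<T} \<longrightarrow> f t \<le> (2*a) * exp (l*t)"
  proof (rule AE_le_weight_of_local_contraction[where \<rho>="\<lambda>_. 1/2"])
    fix T' M :: real
    assume T': "0 < T'" "T' < T" and "0 \<le> M"
      and bound: "AE t in lebesgue. t \<in> {0<..<T'} \<longrightarrow> f t \<le> (2*a + M) * exp (l*t)"
    show "AE t in lebesgue. t \<in> {0<..<T'} \<longrightarrow> f t \<le> (2*a + 1/2 * M) * exp (l*t)"
      using f
    proof (eventually_elim, intro impI)
      fix t assume "t \<in> {0<..<T} \<longrightarrow> 0 \<le> f t \<and>
          f t \<le> a + b * (LINT \<tau>:{0<..<t}|lebesgue. f \<tau> / (\<tau> powr \<alpha> * (t - \<tau>) powr \<beta>))"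
        and t: "t \<in> {0<..<T'}"
      moreover have "AE \<tau> in lebesgue. \<tau> \<in> {0<..<t} \<longrightarrow> f \<tau> \<le> (2*a + M) * exp (l*\<tau>)"
        using bound by eventually_elim (use t in auto)
      ultimately show "f t \<le> (2*a + 1/2 * M) * exp (l*t)"
        using \<alpha> \<alpha>' \<beta> \<open>0 < l\<close> a b \<open>0 \<le> M\<close> T' rate
        by (intro abel_gronwall_step[of \<alpha> \<alpha>' \<beta> l a b M t T]) auto
    qed
  qed (use a bounded \<open>0 < l\<close> in auto)
  with f have "AE t in lebesgue. t \<in> {0<..<T} \<longrightarrow> \<bar>f t\<bar> \<le> 2 * a * exp (l*T)"
    using \<open>0 < l\<close> a by (intro AE_abs_le_exp_endpoint) (auto elim: eventually_mono)
  then show ?thesis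
    unfolding exponent .
qed

definition weakly_singular_gronwall_constant :: "real \<Rightarrow> real \<Rightarrow> real" where
  "weakly_singular_gronwall_constant \<alpha> \<beta> =
    (if \<alpha> = 0 \<and> \<beta> = 0 then 1 else max 2 (abel_gronwall_constant \<alpha> \<beta>))"

lemma weakly_singular_gronwall_AE:
  fixes \<alpha> \<beta> a b T :: real and f :: "real \<Rightarrow> real"
  defines "C \<equiv> weakly_singular_gronwall_constant \<alpha> \<beta>"
  assumes "0 \<le> \<alpha>" "0 \<le> \<beta>" "\<alpha> + \<beta> < 1" and a: "0 \<le> a" and b: "0 < b" and T: "0 < T"
    and bounded: "\<And>T'. T' < T \<Longrightarrow> \<exists>M. AE t in lebesgue. t \<in> {0<..<T'} \<longrightarrow> \<bar>f t\<bar> \<le> M"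
    and f: "AE t in lebesgue. t \<in> {0<..<T} \<longrightarrow>
      0 \<le> f t \<and> f t \<le> a + b * (LINT \<tau>:{0<..<t}|lebesgue. f \<tau> / (\<tau> powr \<alpha> * (t - \<tau>) powr \<beta>))"
  shows "AE t in lebesgue. t \<in> {0<..<T} \<longrightarrow>
    \<bar>f t\<bar> \<le> C * a * exp (C * b powr ((1+\<alpha>+\<beta>)/(1-\<alpha>-\<beta>)) * T powr (1+\<alpha>+\<beta>))"
proof (cases "\<alpha> = 0 \<and> \<beta> = 0")
  case True
  have "(LINT \<tau>:{0<..<t}|lebesgue. f \<tau> / (\<tau> powr 0 * (t - \<tau>) powr 0)) = (LINT \<tau>:{0<..<t}|lebesgue. f \<tau>)"
    for t :: real
    by (rule set_lebesgue_integral_cong) auto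
  then have "AE t in lebesgue. t \<in> {0<..<T} \<longrightarrow> 0 \<le> f t \<and> f t \<le> a + b * (LINT \<tau>:{0<..<t}|lebesgue. f \<tau>)"
    using f True by simp
  from gronwall_AE[OF a b bounded this] show ?thesis
    using True b T by (simp add: C_def weakly_singular_gronwall_constant_def)
next
  case False
  then have positive: "0 < \<alpha> + \<beta>"
    using assms(2,3) by fastforce
  define X where "X = b powr ((1+\<alpha>+\<beta>)/(1-\<alpha>-\<beta>)) * T powr (1+\<alpha>+\<beta>)"
  have C: "C = max 2 (abel_gronwall_constant \<alpha> \<beta>)"
    unfolding C_def weakly_singular_gronwall_constant_def using False by auto
  have "0 \<le> X"
    by (simp add: X_def)
  then have "2 * a * exp (abel_gronwall_constant \<alpha> \<beta> * X) \<le> C * a * exp (C * X)"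
    unfolding C using a by (intro mult_mono mult_right_mono) (auto intro: mult_right_mono)
  moreover have "AE t in lebesgue. t \<in> {0<..<T} \<longrightarrow> \<bar>f t\<bar> \<le> 2 * a * exp (abel_gronwall_constant \<alpha> \<beta> * X)"
    using abel_gronwall_AE[OF assms(2,3) _ assms(4) a b T bounded f] positive
    unfolding X_def by (simp add: mult.assoc)
  ultimately show ?thesis
    unfolding mult.assoc[of C] X_def[symmetric] by (auto elim!: eventually_mono)
qed

theorem lemma2:
  fixes \<alpha> \<beta> :: real
  assumes "\<alpha> \<ge> 0" and "\<beta> \<ge> 0" and "\<alpha> + \<beta> < 1"
  shows "\<exists>C::real. (\<alpha> = 0 \<and> \<beta> = 0 \<longrightarrow> C = 1) \<and>
    (\<forall>(a::real) (b::real) (T::real) (f::real \<Rightarrow> real).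
       a \<ge> 0 \<longrightarrow> b > 0 \<longrightarrow> T > 0 \<longrightarrow>
       (\<forall>T' < T. f \<in> borel_measurable (restrict_space lebesgue {0<..<T'}) \<and>
                  (\<exists>M. AE t in lebesgue. t \<in> {0<..<T'} \<longrightarrow> \<bar>f t\<bar> \<le> M)) \<longrightarrow>
       (AE t in lebesgue. t \<in> {0<..<T} \<longrightarrow>
          0 \<le> f t \<and>
          f t \<le> a + b * (LINT \<tau>:{0<..<t}|lebesgue. f \<tau> / (\<tau> powr \<alpha> * (t - \<tau>) powr \<beta>))) \<longrightarrow>
       f \<in> borel_measurable (restrict_space lebesgue {0<..<T}) \<and>
       (AE t in lebesgue. t \<in> {0<..<T} \<longrightarrow>
          \<bar>f t\<bar> \<le> C * a * exp (C * b powr ((1 + \<alpha> + \<beta>) / (1 - \<alpha> - \<beta>)) * T powr (1 + \<alpha> + \<beta>))))"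
proof (intro exI[of _ "weakly_singular_gronwall_constant \<alpha> \<beta>"] conjI allI impI)
  show "weakly_singular_gronwall_constant \<alpha> \<beta> = 1" if "\<alpha> = 0 \<and> \<beta> = 0"
    using that by (simp add: weakly_singular_gronwall_constant_def)
next
  fix a b T :: real and f :: "real \<Rightarrow> real"
  assume a: "a \<ge> 0" and b: "b > 0" and T: "T > 0"
    and local: "\<forall>T' < T. f \<in> borel_measurable (restrict_space lebesgue {0<..<T'}) \<and>
      (\<exists>M. AE t in lebesgue. t \<in> {0<..<T'} \<longrightarrow> \<bar>f t\<bar> \<le> M)"
    and f: "AE t in lebesgue. t \<in> {0<..<T} \<longrightarrow> 0 \<le> f t \<and>
      f t \<le> a + b * (LINT \<tau>:{0<..<t}|lebesgue. f \<tau> / (\<tau> powr \<alpha> * (t - \<tau>) powr \<beta>))"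
  show "f \<in> borel_measurable (restrict_space lebesgue {0<..<T})"
    by (rule borel_measurable_greaterThanLessThan_of_initial_segments) (use local in blast)
  have bounded: "\<And>T'. T' < T \<Longrightarrow> \<exists>M. AE t in lebesgue. t \<in> {0<..<T'} \<longrightarrow> \<bar>f t\<bar> \<le> M"
    using local by blast
  show "AE t in lebesgue. t \<in> {0<..<T} \<longrightarrow> \<bar>f t\<bar> \<le> weakly_singular_gronwall_constant \<alpha> \<beta> * a *
      exp (weakly_singular_gronwall_constant \<alpha> \<beta> * b powr ((1 + \<alpha> + \<beta>) / (1 - \<alpha> - \<beta>)) * T powr (1 + \<alpha> + \<beta>))"
    by (rule weakly_singular_gronwall_AE[OF assms a b T bounded f])
qed

end
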